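(* Let $b>1$ be an integer and let $\mathcal{A}$ be a minimal complete deterministic automaton over $A_b=\{0,\ldots,b-1\}$ whose initial state bears a self-loop labelled by $0$. Let $\ell$ be the number of states of $\mathcal{A}$ that belong to $0$-circuits. Then $\mathcal{A}$ accepts by value a purely periodic set of integers if and only if the following two conditions hold: (a) there exists a pseudo-morphism $\phi:\mathcal{A}\to\mathcal{A}_{?,\ell}$; (b) for all states $s,s'$ of $\mathcal{A}$, if $\phi(s)=\phi(s')$ then $s$ and $s'$ are ultimately-equivalent.
   Context: For $u=u_\ell\cdots u_0\in A_b^*$, $\mathrm{val}(u)=\sum_i u_i b^i$. An automaton accepts by value a set $X\subseteq\mathbb{N}$ if for every word $u$, $u$ is accepted iff $\mathrm{val}(u)\in X$. A set $P\subseteq\mathbb{N}$ is purely periodic if $P=R+p\mathbb{N}$ for some $p\ge1$ and $R\subseteq\{0,\ldots,p-1\}$. For $s$ a state and $u$ a word, $s\cdot u$ denotes the state reached from $s$ by reading $u$. A $0$-circuit is a circuit of the automaton all of whose transitions are labelled by the digit $0$. For an integer $q\ge1$, $\mathcal{A}_{?,q}$ is the deterministic complete automaton over $A_b$ with state set $\mathbb{Z}/q\mathbb{Z}=\{0,\ldots,q-1\}$, initial state $0$, transitions $n\xrightarrow{a}(nb+a)\bmod q$, and no specified final states. A pseudo-morphism between complete deterministic automata $\mathcal{A}\to\mathcal{M}$ is a map $\phi$ from states of $\mathcal{A}$ to states of $\mathcal{M}$ such that $\phi$ maps the initial state to the initial state and, for every state $s$ and letter $a$, $\phi(s\cdot a)=\phi(s)\cdot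 a$ (final states need not be preserved). Two states $s,s'$ are ultimately-equivalent if there exists $m\ge1$ such that $s\cdot u=s'\cdot u$ for every word $u$ with $|u|\ge m$. *)

theory Defs
  imports Main
begin

text \<open>Words over A_b are lists of digits in {..<b}, written most significant digit first:
  the list [u_l, ..., u_0].\<close>

definition run :: "('s \<Rightarrow> nat \<Rightarrow> 's) \<Rightarrow> 's \<Rightarrow> nat list \<Rightarrow> 's" where
  "run \<delta> s u = foldl \<delta> s u"

definition val :: "nat \<Rightarrow> nat list \<Rightarrow> nat" where
  "val b u = foldl (\<lambda>n a. n * b + a) 0 u"

definition complete_det_aut ::
  "nat \<Rightarrow> 's set \<Rightarrow> 's \<Rightarrow> ('s \<Rightarrow> nat \<Rightarrow> 's) \<Rightarrow> 's set \<Rightarrow> bool" where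
  "complete_det_aut b Q q0 \<delta> F \<longleftrightarrow>
     finite Q \<and> q0 \<in> Q \<and> F \<subseteq> Q \<and> (\<forall>s\<in>Q. \<forall>a<b. \<delta> s a \<in> Q)"

definition minimal_aut ::
  "nat \<Rightarrow> 's set \<Rightarrow> 's \<Rightarrow> ('s \<Rightarrow> nat \<Rightarrow> 's) \<Rightarrow> 's set \<Rightarrow> bool" where
  "minimal_aut b Q q0 \<delta> F \<longleftrightarrow>
     complete_det_aut b Q q0 \<delta> F \<and>
     (\<forall>s\<in>Q. \<exists>u\<in>lists {..<b}. run \<delta> q0 u = s) \<and>
     (\<forall>s\<in>Q. \<forall>s'\<in>Q. s \<noteq> s' \<longrightarrow>
        (\<exists>u\<in>lists {..<b}. (run \<delta> s u \<in> F) \<noteq> (run \<delta> s' u \<in> F)))"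

definition on_zero_circuit :: "('s \<Rightarrow> nat \<Rightarrow> 's) \<Rightarrow> 's \<Rightarrow> bool" where
  "on_zero_circuit \<delta> s \<longleftrightarrow> (\<exists>k\<ge>1. ((\<lambda>t. \<delta> t 0) ^^ k) s = s)"

definition accepts_by_value ::
  "nat \<Rightarrow> 's \<Rightarrow> ('s \<Rightarrow> nat \<Rightarrow> 's) \<Rightarrow> 's set \<Rightarrow> nat set \<Rightarrow> bool" where
  "accepts_by_value b q0 \<delta> F X \<longleftrightarrow>
     (\<forall>u\<in>lists {..<b}. (run \<delta> q0 u \<in> F) \<longleftrightarrow> val b u \<in> X)"

definition purely_periodic :: "nat set \<Rightarrow> bool" where
  "purely_periodic P \<longleftrightarrow>
     (\<exists>p\<ge>1. \<exists>R \<subseteq> {..<p}. P = {r + p * k | r k. r \<in> R})"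

text \<open>Pseudo-morphism into A_{?,q} (states {0..<q}, initial 0, n -a-> (n*b+a) mod q).\<close>
definition pseudo_morphism_to_mod ::
  "nat \<Rightarrow> 's set \<Rightarrow> 's \<Rightarrow> ('s \<Rightarrow> nat \<Rightarrow> 's) \<Rightarrow> nat \<Rightarrow> ('s \<Rightarrow> nat) \<Rightarrow> bool" where
  "pseudo_morphism_to_mod b Q q0 \<delta> q \<phi> \<longleftrightarrow>
     \<phi> q0 = 0 \<and> (\<forall>s\<in>Q. \<phi> s < q) \<and>
     (\<forall>s\<in>Q. \<forall>a<b. \<phi> (\<delta> s a) = (\<phi> s * b + a) mod q)"

definition ult_equiv :: "nat \<Rightarrow> ('s \<Rightarrow> nat \<Rightarrow> 's) \<Rightarrow> 's \<Rightarrow> 's \<Rightarrow> bool" where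
  "ult_equiv b \<delta> s s' \<longleftrightarrow>
     (\<exists>m\<ge>1. \<forall>u\<in>lists {..<b}. length u \<ge> m \<longrightarrow> run \<delta> s u = run \<delta> s' u)"

end

theory Submission
  imports Defs
begin

text \<open>Because the initial state carries a 0-loop, the state reached on a word depends only on
  its value x; call it state_of x, so that reading a digit a from state_of x leads to
  state_of (x * b + a).

  If the accepted set is purely periodic with period p, minimality makes state_of p-periodic.
  Pick N with b^(2N) = b^N (mod p) and p < b^N. The states circuit_state x = state_of (x * b^N),
  reached after reading N zeros, are exactly the states on 0-circuits, and circuit_state (x + w)
  is reached from circuit_state x by a word depending on w only. Hence the kernel of
  circuit_state is congruence modulo some L, which is thus the number of states on 0-circuits,
  and x mod L defines the pseudo-morphism on state_of x. Words of length at least N lead from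
  state_of x and circuit_state x to the same state, which gives ultimate equivalence.

  Conversely, given the pseudo-morphism, ultimate equivalence of the finitely many pairs of
  states with equal image holds beyond a common length M. Reading x as its quotient by b^M
  followed by its last M digits, the intermediate state has image (x div b^M) mod l, so
  state_of x only depends on x mod (b^M * l).\<close>

fun digits :: "nat \<Rightarrow> nat \<Rightarrow> nat \<Rightarrow> nat list" where
  "digits b 0 x = []"
| "digits b (Suc n) x = digits b n (x div b) @ [x mod b]"

lemma length_digits [simp]: "length (digits b n x) = n"
  by (induction n arbitrary: x) auto

lemma digits_in_lists: "0 < b \<Longrightarrow> digits b n x \<in> lists {..<b}"
  by (induction n arbitrary: x) auto

lemma val_Nil [simp]: "val b [] = 0"
  by (simp add: val_def)

lemma val_snoc [simp]: "val b (u @ [a]) = val b u * b + a"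
  by (simp add: val_def)

lemma val_replicate_0 [simp]: "val b (replicate k 0) = 0"
  by (induction k) (auto simp: val_def)

lemma val_digits: "val b (digits b n x) = x mod b ^ n"
proof (induction n arbitrary: x)
  case (Suc n)
  then show ?case by (simp add: mod_mult2_eq mult.commute)
qed simp

lemma digits_add: "digits b (m + n) x = digits b m (x div b ^ n) @ digits b n x"
  by (induction n arbitrary: x) (simp_all add: div_mult2_eq)

lemma digits_0: "digits b m 0 = replicate m 0"
  by (induction m) (auto simp: replicate_append_same)

lemma digits_pad: "x < b ^ n \<Longrightarrow> digits b (m + n) x = replicate m 0 @ digits b n x"
  by (simp add: digits_add digits_0)

lemma digits_mod_power: "digits b n (x mod b ^ n) = digits b n x"
proof (induction n arbitrary: x)
  case (Suc n)
  then show ?case by (cases "b = 0") (simp_all add: mod_mult2_eq mult.commute)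
qed simp

lemma run_Nil [simp]: "run \<delta> s [] = s"
  by (simp add: run_def)

lemma run_Cons: "run \<delta> s (a # u) = run \<delta> (\<delta> s a) u"
  by (simp add: run_def)

lemma run_append: "run \<delta> s (u @ v) = run \<delta> (run \<delta> s u) v"
  by (simp add: run_def)

lemma run_snoc [simp]: "run \<delta> s (u @ [a]) = \<delta> (run \<delta> s u) a"
  by (simp add: run_def)

lemma run_replicate_loop: "\<delta> q 0 = q \<Longrightarrow> run \<delta> q (replicate m 0) = q"
  by (induction m) (auto simp: run_Cons)

lemma funpow_eq_run_replicate: "((\<lambda>t. \<delta> t 0) ^^ k) s = run \<delta> s (replicate k 0)"
proof (induction k)
  case (Suc k)
  have "replicate (Suc k) (0::nat) = replicate k 0 @ [0]"
    by (simp add: replicate_append_same)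
  with Suc show ?case by simp
qed simp

lemma run_in_closed:
  "(\<forall>s\<in>Q. \<forall>a<b. \<delta> s a \<in> Q) \<Longrightarrow> s \<in> Q \<Longrightarrow> u \<in> lists {..<b} \<Longrightarrow> run \<delta> s u \<in> Q"
  by (induction u arbitrary: s) (auto simp: run_Cons)

lemma purely_periodic_iff_mod: "purely_periodic X \<longleftrightarrow> (\<exists>p\<ge>1. \<forall>x. x \<in> X \<longleftrightarrow> x mod p \<in> X)"
proof
  assume "purely_periodic X"
  then obtain p R where p: "p \<ge> 1" "R \<subseteq> {..<p}" and X: "X = {r + p * k | r k. r \<in> R}"
    unfolding purely_periodic_def by blast
  have "x \<in> X \<longleftrightarrow> x mod p \<in> R" for x
  proof
    assume "x \<in> X"
    then obtain r k where "x = r + p * k" "r \<in> R" using X by blast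
    with p(2) show "x mod p \<in> R" by auto
  next
    assume "x mod p \<in> R"
    then show "x \<in> X" unfolding X by (metis (mono_tags) mod_mult_div_eq mem_Collect_eq)
  qed
  with p(1) show "\<exists>p\<ge>1. \<forall>x. x \<in> X \<longleftrightarrow> x mod p \<in> X" by auto
next
  assume "\<exists>p\<ge>1. \<forall>x. x \<in> X \<longleftrightarrow> x mod p \<in> X"
  then obtain p where p: "p \<ge> 1" and X: "\<And>x. x \<in> X \<longleftrightarrow> x mod p \<in> X" by blast
  define R where "R = {r. r < p \<and> r \<in> X}"
  have "X = {r + p * k | r k. r \<in> R}"
  proof (intro set_eqI iffI)
    fix x assume "x \<in> X"
    with p X have "x mod p \<in> R" by (simp add: R_def)
    then show "x \<in> {r + p * k | r k. r \<in> R}" by (metis (mono_tags) mod_mult_div_eq mem_Collect_eq)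
  next
    fix x assume "x \<in> {r + p * k | r k. r \<in> R}"
    then obtain r k where "x = r + p * k" "r < p" "r \<in> X" by (auto simp: R_def)
    with X show "x \<in> X" by (metis mod_less mod_mult_self2)
  qed
  moreover have "R \<subseteq> {..<p}" by (auto simp: R_def)
  ultimately show "purely_periodic X" using p unfolding purely_periodic_def by blast
qed

lemma eventually_periodic_power_mod:
  assumes "0 < (p::nat)"
  shows "\<exists>e>0. \<exists>i. \<forall>n\<ge>i. \<forall>c. b ^ (n + c * e) mod p = b ^ n mod p"
proof -
  have "card ((\<lambda>n. b ^ n mod p) ` {..p}) \<le> card {..<p}"
    using assms by (intro card_mono) auto
  then have "\<not> inj_on (\<lambda>n. b ^ n mod p) {..p}"
    using card_image by fastforce
  then obtain m n where mn: "m \<noteq> n" "b ^ m mod p = b ^ n mod p"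
    unfolding inj_on_def by blast
  obtain d i where ij: "0 < d" "b ^ i mod p = b ^ (i + d) mod p"
  proof (cases "m < n")
    case True
    with mn show thesis by (intro that[of "n - m" m]) simp_all
  next
    case False
    with mn show thesis by (intro that[of "m - n" n]) simp_all
  qed
  have per: "b ^ (n + c * d) mod p = b ^ n mod p" if "i \<le> n" for n c
  proof (induction c)
    case (Suc c)
    have "n + Suc c * d = (i + d) + (n + c * d - i)" and "n + c * d = i + (n + c * d - i)"
      using that by simp_all
    then show ?case using Suc ij(2) by (metis power_add mod_mult_left_eq)
  qed simp
  with ij(1) show ?thesis by blast
qed

lemma idempotent_power_mod:
  assumes "1 < b" "0 < (p::nat)"
  obtains N where "1 \<le> N" "p < b ^ N" "b ^ (2 * N) mod p = b ^ N mod p"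
proof -
  obtain e i where e: "0 < e" and per: "\<And>n c. i \<le> n \<Longrightarrow> b ^ (n + c * e) mod p = b ^ n mod p"
    using eventually_periodic_power_mod[OF assms(2), of b] by blast
  define N where "N = (i + p + 1) * e"
  have N: "i + p + 1 \<le> N"
    using mult_le_mono2[of 1 e "i + p + 1"] e by (simp add: N_def)
  have "p < b ^ p"
    using assms(1) power_gt_expt[of b p] by simp
  also have "\<dots> \<le> b ^ N"
    using N assms(1) by (intro power_increasing) simp_all
  finally have "p < b ^ N" .
  moreover have "2 * N = N + (i + p + 1) * e"
    by (simp add: N_def)
  then have "b ^ (2 * N) mod p = b ^ N mod p"
    using per[of N "i + p + 1"] N by (simp only:)
  ultimately show thesis
    using N by (intro that) simp_all
qed

lemma translation_invariant_kernel:
  fixes g :: "nat \<Rightarrow> 'a"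
  assumes "0 < p" "g p = g 0" and inv: "\<And>x y w. g x = g y \<Longrightarrow> g (x + w) = g (y + w)"
  defines "L \<equiv> LEAST t. 0 < t \<and> g t = g 0"
  shows "0 < L" and "g x = g y \<longleftrightarrow> x mod L = y mod L"
proof -
  have L: "0 < L \<and> g L = g 0"
    unfolding L_def by (rule LeastI[of _ p]) (use assms(1,2) in blast)
  have L_least: "L \<le> t" if "0 < t" "g t = g 0" for t
    unfolding L_def by (rule Least_le) (use that in blast)
  show "0 < L" using L ..
  have step: "g (x + L) = g x" for x
    using inv[of L 0 x] L by (simp add: add.commute)
  have shift: "g (x + c * L) = g x" for x c
  proof (induction c)
    case (Suc c)
    have "g (x + Suc c * L) = g ((x + c * L) + L)" by (simp add: algebra_simps)
    also have "\<dots> = g x" using step Suc.IH by simp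
    finally show ?case .
  qed simp
  have g_mod: "g x = g (x mod L)" for x
    using shift[of "x mod L" "x div L"] by simp
  have eq: "a = c" if "g a = g c" "a \<le> c" "c < L" for a c
  proof (rule ccontr)
    assume "a \<noteq> c"
    have "g 0 = g (a + (L - a))" using that L by simp
    also have "\<dots> = g (c + (L - a))" using inv[OF that(1)] .
    also have "c + (L - a) = (c - a) + L" using that by simp
    finally have "g (c - a) = g 0" using step by simp
    with \<open>a \<noteq> c\<close> that show False using L_least[of "c - a"] by simp
  qed
  show "g x = g y \<longleftrightarrow> x mod L = y mod L"
  proof
    assume "g x = g y"
    then have "g (x mod L) = g (y mod L)" using g_mod by simp
    moreover have "x mod L < L" "y mod L < L" using L by simp_all
    ultimately show "x mod L = y mod L"
      using eq eq[symmetric] by (cases "x mod L \<le> y mod L") simp_all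
  qed (simp add: g_mod[of x] g_mod[of y])
qed

lemma uniform_ult_equiv_bound:
  assumes "finite S" "\<And>s s'. (s, s') \<in> S \<Longrightarrow> ult_equiv b \<delta> s s'"
  obtains M where "\<And>s s' u. (s, s') \<in> S \<Longrightarrow> u \<in> lists {..<b} \<Longrightarrow> M \<le> length u \<Longrightarrow>
    run \<delta> s u = run \<delta> s' u"
proof -
  have "\<forall>z\<in>S. \<exists>k. \<forall>u\<in>lists {..<b}. k \<le> length u \<longrightarrow> run \<delta> (fst z) u = run \<delta> (snd z) u"
    using assms(2) unfolding ult_equiv_def by (metis prod.collapse)
  then obtain m where m: "\<forall>z\<in>S. \<forall>u\<in>lists {..<b}. m z \<le> length u \<longrightarrow> run \<delta> (fst z) u = run \<delta> (snd z) u"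
    by (rule bchoice[elim_format]) blast
  show thesis
  proof (rule that)
    fix s s' u assume "(s, s') \<in> S" "u \<in> lists {..<b}" "Max (m ` S) \<le> length u"
    moreover have "m (s, s') \<le> Max (m ` S)" using assms(1) \<open>(s, s') \<in> S\<close> by simp
    ultimately show "run \<delta> s u = run \<delta> s' u" using m by force
  qed
qed

locale zero_loop_aut =
  fixes b :: nat and Q :: "'s set" and q0 :: 's and \<delta> :: "'s \<Rightarrow> nat \<Rightarrow> 's" and F :: "'s set"
  assumes b_gt_1: "1 < b" and complete: "complete_det_aut b Q q0 \<delta> F" and zero_loop: "\<delta> q0 0 = q0"
begin

lemma finite_Q: "finite Q" and q0_in_Q: "q0 \<in> Q" and delta_closed: "\<forall>s\<in>Q. \<forall>a<b. \<delta> s a \<in> Q"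
  using complete unfolding complete_det_aut_def by auto

lemma less_power_self: "x < b ^ x"
  using b_gt_1 by (simp add: power_gt_expt)

text \<open>The state reached on any word of value x: leading zeros are read on the 0-loop at q0,
  and x digits suffice since x < b ^ x.\<close>
definition state_of :: "nat \<Rightarrow> 's" where
  "state_of x = run \<delta> q0 (digits b x x)"

lemma run_digits: "x < b ^ m \<Longrightarrow> run \<delta> q0 (digits b m x) = state_of x"
proof -
  assume "x < b ^ m"
  then have "replicate x 0 @ digits b m x = replicate m 0 @ digits b x x"
    using digits_pad[of x b m x] digits_pad[OF less_power_self[of x], where m = m]
    by (simp add: add.commute)
  then show ?thesis
    by (metis run_append run_replicate_loop zero_loop state_of_def)
qed

lemma state_of_0 [simp]: "state_of 0 = q0"
  by (simp add: state_of_def)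

lemma state_of_in_Q: "state_of x \<in> Q"
  unfolding state_of_def using b_gt_1 by (intro run_in_closed[OF delta_closed q0_in_Q digits_in_lists]) simp

lemma delta_state_of: "a < b \<Longrightarrow> \<delta> (state_of x) a = state_of (x * b + a)"
proof -
  assume a: "a < b"
  have "Suc x * b \<le> b ^ x * b"
    using less_power_self[of x] by (intro mult_right_mono) simp_all
  with a have "x * b + a < b ^ Suc x" by (simp add: mult.commute)
  moreover have "digits b (Suc x) (x * b + a) = digits b x x @ [a]" using a by simp
  ultimately show ?thesis
    using run_digits[of "x * b + a" "Suc x"] by (simp add: state_of_def)
qed

lemma run_state_of:
  "v \<in> lists {..<b} \<Longrightarrow> run \<delta> (state_of x) v = state_of (x * b ^ length v + val b v)"
  by (induction v rule: rev_induct) (simp_all add: delta_state_of algebra_simps)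

lemma run_state_of_digits: "c < b ^ n \<Longrightarrow> run \<delta> (state_of x) (digits b n c) = state_of (x * b ^ n + c)"
  using b_gt_1 by (simp add: run_state_of digits_in_lists val_digits)

lemma run_q0: "u \<in> lists {..<b} \<Longrightarrow> run \<delta> q0 u = state_of (val b u)"
  using run_state_of[of u 0] by simp

lemma run_zeros_state_of: "run \<delta> (state_of x) (replicate k 0) = state_of (x * b ^ k)"
  using b_gt_1 by (subst run_state_of) auto

lemma state_of_split: "state_of x = run \<delta> (state_of (x div b ^ M)) (digits b M x)"
  using b_gt_1 by (simp add: run_state_of digits_in_lists val_digits div_mult_mod_eq)

lemma pseudo_morphism_run:
  assumes "pseudo_morphism_to_mod b Q q0 \<delta> l \<phi>" "s \<in> Q" "u \<in> lists {..<b}"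
  shows "\<phi> (run \<delta> s u) = (\<phi> s * b ^ length u + val b u) mod l"
  using assms(3)
proof (induction u rule: rev_induct)
  case Nil
  then show ?case using assms(1,2) by (simp add: pseudo_morphism_to_mod_def)
next
  case (snoc a u)
  then have "run \<delta> s u \<in> Q" "a < b" "u \<in> lists {..<b}"
    using run_in_closed[OF delta_closed assms(2)] by auto
  with snoc assms(1) have "\<phi> (run \<delta> s (u @ [a])) = ((\<phi> s * b ^ length u + val b u) mod l * b + a) mod l"
    by (simp add: pseudo_morphism_to_mod_def)
  also have "\<dots> = ((\<phi> s * b ^ length u + val b u) * b + a) mod l"
    by (metis mod_add_left_eq mod_mult_left_eq)
  finally show ?case by (simp add: algebra_simps)
qed

lemma pseudo_morphism_state_of:
  "pseudo_morphism_to_mod b Q q0 \<delta> l \<phi> \<Longrightarrow> \<phi> (state_of x) = x mod l"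
  using pseudo_morphism_run[OF _ q0_in_Q, of l \<phi> "digits b x x"] b_gt_1 less_power_self
  by (simp add: state_of_def pseudo_morphism_to_mod_def digits_in_lists val_digits)

lemma state_of_periodic_if_pseudo_morphism:
  assumes pm: "pseudo_morphism_to_mod b Q q0 \<delta> l \<phi>"
    and M: "\<And>s s' u. s \<in> Q \<Longrightarrow> s' \<in> Q \<Longrightarrow> \<phi> s = \<phi> s' \<Longrightarrow> u \<in> lists {..<b} \<Longrightarrow>
      M \<le> length u \<Longrightarrow> run \<delta> s u = run \<delta> s' u"
    and xy: "x mod (b ^ M * l) = y mod (b ^ M * l)"
  shows "state_of x = state_of y"
proof -
  have "x mod b ^ M = y mod b ^ M"
    using xy by (metis mod_mod_cancel dvd_triv_left)
  then have digits_eq: "digits b M x = digits b M y"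
    by (metis digits_mod_power)
  have "z mod (b ^ M * l) div b ^ M = z div b ^ M mod l" for z
    using b_gt_1 by (simp add: mod_mult2_eq)
  then have "x div b ^ M mod l = y div b ^ M mod l"
    using xy by metis
  then have "\<phi> (state_of (x div b ^ M)) = \<phi> (state_of (y div b ^ M))"
    unfolding pseudo_morphism_state_of[OF pm] .
  then have "run \<delta> (state_of (x div b ^ M)) (digits b M y) = run \<delta> (state_of (y div b ^ M)) (digits b M y)"
    using b_gt_1 by (intro M state_of_in_Q digits_in_lists) simp_all
  then show ?thesis
    using digits_eq state_of_split[of x M] state_of_split[of y M] by simp
qed

lemma purely_periodic_if_pseudo_morphism:
  assumes pm: "pseudo_morphism_to_mod b Q q0 \<delta> l \<phi>"
    and ue: "\<forall>s\<in>Q. \<forall>s'\<in>Q. \<phi> s = \<phi> s' \<longrightarrow> ult_equiv b \<delta> s s'"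
  shows "\<exists>X. accepts_by_value b q0 \<delta> F X \<and> purely_periodic X"
proof -
  let ?S = "{(s, s'). s \<in> Q \<and> s' \<in> Q \<and> \<phi> s = \<phi> s'}"
  have "finite ?S"
    by (rule finite_subset[of _ "Q \<times> Q"]) (auto simp: finite_Q)
  then obtain M where M: "\<And>s s' u. (s, s') \<in> ?S \<Longrightarrow> u \<in> lists {..<b} \<Longrightarrow> M \<le> length u \<Longrightarrow>
      run \<delta> s u = run \<delta> s' u"
    using ue by (elim uniform_ult_equiv_bound) auto
  have "0 < l"
    using pm q0_in_Q by (auto simp: pseudo_morphism_to_mod_def)
  with b_gt_1 have "1 \<le> b ^ M * l" by simp
  moreover have "state_of x = state_of (x mod (b ^ M * l))" for x
    using M by (intro state_of_periodic_if_pseudo_morphism[OF pm]) auto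
  ultimately have "purely_periodic {x. state_of x \<in> F}"
    unfolding purely_periodic_iff_mod by (intro exI[of _ "b ^ M * l"]) auto
  moreover have "accepts_by_value b q0 \<delta> F {x. state_of x \<in> F}"
    by (simp add: accepts_by_value_def run_q0)
  ultimately show ?thesis by blast
qed

end

locale minimal_zero_loop_aut = zero_loop_aut +
  assumes minimal: "minimal_aut b Q q0 \<delta> F"
begin

lemma accessible: "\<forall>s\<in>Q. \<exists>u\<in>lists {..<b}. run \<delta> q0 u = s"
  and distinguishable: "\<forall>s\<in>Q. \<forall>s'\<in>Q. s \<noteq> s' \<longrightarrow> (\<exists>u\<in>lists {..<b}. (run \<delta> s u \<in> F) \<noteq> (run \<delta> s' u \<in> F))"
  using minimal unfolding minimal_aut_def by simp_all

lemma state_of_surj: "s \<in> Q \<Longrightarrow> \<exists>x. s = state_of x"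
  using accessible by (auto simp: run_q0)

lemma state_of_mod_eq_if_periodic_language:
  assumes acc: "accepts_by_value b q0 \<delta> F X" and per: "\<And>x. x \<in> X \<longleftrightarrow> x mod p \<in> X"
    and xy: "x mod p = y mod p"
  shows "state_of x = state_of y"
proof (rule ccontr)
  have in_F: "state_of z \<in> F \<longleftrightarrow> z mod p \<in> X" for z
  proof -
    have "state_of z \<in> F \<longleftrightarrow> val b (digits b z z) \<in> X"
      using acc digits_in_lists[of b z z] b_gt_1 unfolding accepts_by_value_def state_of_def by simp
    then show ?thesis
      using less_power_self[of z] per by (simp add: val_digits)
  qed
  assume "state_of x \<noteq> state_of y"
  then obtain u where u: "u \<in> lists {..<b}"
    "(run \<delta> (state_of x) u \<in> F) \<noteq> (run \<delta> (state_of y) u \<in> F)"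
    using distinguishable state_of_in_Q by blast
  have "(x * b ^ length u + val b u) mod p = (y * b ^ length u + val b u) mod p"
    using xy by (metis mod_add_left_eq mod_mult_left_eq)
  with u show False by (simp add: run_state_of in_F)
qed

end

locale periodic_zero_loop_aut = minimal_zero_loop_aut b Q q0 \<delta> F
  for b and Q :: "'s set" and q0 and \<delta> and F +
  fixes p N :: nat
  assumes p_pos: "0 < p" and state_of_mod: "\<And>x y. x mod p = y mod p \<Longrightarrow> state_of x = state_of y"
    and N_pos: "1 \<le> N" and p_less: "p < b ^ N" and power_idem: "b ^ (2 * N) mod p = b ^ N mod p"
begin

definition circuit_state :: "nat \<Rightarrow> 's" where
  "circuit_state x = state_of (x * b ^ N)"

lemma circuit_state_in_Q: "circuit_state x \<in> Q"
  by (simp add: circuit_state_def state_of_in_Q)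

lemma power_mod_shift: "N \<le> n \<Longrightarrow> b ^ (n + N) mod p = b ^ n mod p"
proof -
  assume "N \<le> n"
  then have "b ^ (n + N) = b ^ (n - N) * b ^ (2 * N)" and "b ^ n = b ^ (n - N) * b ^ N"
    by (simp_all add: add.commute flip: power_add)
  then show ?thesis using power_idem by (metis mod_mult_right_eq)
qed

lemma mult_power_idem_mod: "y * b ^ N * b ^ N mod p = y * b ^ N mod p"
proof -
  have "y * b ^ N * b ^ N mod p = y * (b ^ (2 * N) mod p) mod p"
    by (simp add: mod_mult_right_eq mult_2 power_add mult.assoc)
  also have "\<dots> = y * b ^ N mod p"
    by (simp add: power_idem mod_mult_right_eq)
  finally show ?thesis .
qed

lemma circuit_state_zeros: "run \<delta> (circuit_state x) (replicate N 0) = circuit_state x"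
  unfolding circuit_state_def run_zeros_state_of by (rule state_of_mod) (rule mult_power_idem_mod)

lemma circuit_state_add: "circuit_state (x + w) = run \<delta> (circuit_state x) (digits b N (w * b ^ N mod p))"
proof -
  let ?c = "w * b ^ N mod p"
  have "?c < b ^ N"
    using p_pos p_less by (meson mod_less_divisor order.strict_trans)
  then have run: "run \<delta> (circuit_state x) (digits b N ?c) = state_of (x * b ^ N * b ^ N + ?c)"
    unfolding circuit_state_def by (rule run_state_of_digits)
  have "(x * b ^ N * b ^ N + ?c) mod p = (x * b ^ N * b ^ N mod p + ?c) mod p"
    by (simp add: mod_add_left_eq)
  also have "\<dots> = (x * b ^ N mod p + ?c) mod p"
    by (simp only: mult_power_idem_mod)
  also have "\<dots> = (x + w) * b ^ N mod p"
    by (simp add: mod_add_eq distrib_right)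
  finally have "(x * b ^ N * b ^ N + ?c) mod p = (x + w) * b ^ N mod p" .
  then have "state_of (x * b ^ N * b ^ N + ?c) = circuit_state (x + w)"
    unfolding circuit_state_def by (rule state_of_mod)
  with run show ?thesis by simp
qed

lemma circuit_state_translation:
  "circuit_state x = circuit_state y \<Longrightarrow> circuit_state (x + w) = circuit_state (y + w)"
  by (simp add: circuit_state_add)

lemma circuit_state_period: "circuit_state p = circuit_state 0"
  unfolding circuit_state_def by (rule state_of_mod) simp

definition circuit_period :: nat where
  "circuit_period = (LEAST t. 0 < t \<and> circuit_state t = circuit_state 0)"

lemma circuit_period_pos: "0 < circuit_period"
  and circuit_state_eq_iff: "circuit_state x = circuit_state y \<longleftrightarrow> x mod circuit_period = y mod circuit_period"
  unfolding circuit_period_def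
  using translation_invariant_kernel[OF p_pos circuit_state_period circuit_state_translation] by blast+

lemma state_of_eq_imp_mod_eq:
  "state_of x = state_of y \<Longrightarrow> x mod circuit_period = y mod circuit_period"
  unfolding circuit_state_eq_iff[symmetric] circuit_state_def
  by (metis run_zeros_state_of)

lemma zero_circuit_states: "{s \<in> Q. on_zero_circuit \<delta> s} = circuit_state ` {..<circuit_period}"
proof (intro set_eqI iffI)
  fix s assume "s \<in> {s \<in> Q. on_zero_circuit \<delta> s}"
  then obtain x k where s: "s = state_of x" and k: "1 \<le> k" "((\<lambda>t. \<delta> t 0) ^^ k) s = s"
    using state_of_surj unfolding on_zero_circuit_def by blast
  have "((\<lambda>t. \<delta> t 0) ^^ (k * N)) s = s"
    using funpow_mod_eq[OF k(2), of "k * N"] by simp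
  moreover have "x * b ^ (k * N) = x * b ^ ((k - 1) * N) * b ^ N"
    using k(1) by (simp add: mult.assoc flip: power_add) (simp add: algebra_simps)
  ultimately have "s = circuit_state (x * b ^ ((k - 1) * N))"
    by (simp add: s funpow_eq_run_replicate run_zeros_state_of circuit_state_def)
  also have "\<dots> = circuit_state (x * b ^ ((k - 1) * N) mod circuit_period)"
    by (simp add: circuit_state_eq_iff)
  finally show "s \<in> circuit_state ` {..<circuit_period}"
    using circuit_period_pos by auto
next
  fix s assume "s \<in> circuit_state ` {..<circuit_period}"
  then obtain x where "s = circuit_state x" by blast
  then show "s \<in> {s \<in> Q. on_zero_circuit \<delta> s}"
    using N_pos circuit_state_zeros circuit_state_in_Q
    unfolding on_zero_circuit_def by (auto simp: funpow_eq_run_replicate)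
qed

lemma card_zero_circuit_states: "card {s \<in> Q. on_zero_circuit \<delta> s} = circuit_period"
proof -
  have "inj_on circuit_state {..<circuit_period}"
    by (rule inj_onI) (simp add: circuit_state_eq_iff)
  then show ?thesis by (simp add: zero_circuit_states card_image)
qed

definition residue :: "'s \<Rightarrow> nat" where
  "residue s = (SOME x. state_of x = s) mod circuit_period"

lemma residue_state_of: "residue (state_of x) = x mod circuit_period"
  unfolding residue_def by (rule state_of_eq_imp_mod_eq, rule someI) (rule refl)

lemma pseudo_morphism_residue: "pseudo_morphism_to_mod b Q q0 \<delta> circuit_period residue"
  unfolding pseudo_morphism_to_mod_def
proof (intro conjI ballI allI impI)
  show "residue q0 = 0" using residue_state_of[of 0] by simp
next
  fix s assume "s \<in> Q"
  then obtain x where "s = state_of x" using state_of_surj by blast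
  then show "residue s < circuit_period"
    using circuit_period_pos by (simp add: residue_state_of)
next
  fix s a assume "s \<in> Q" "a < b"
  then obtain x where "s = state_of x" using state_of_surj by blast
  with \<open>a < b\<close> show "residue (\<delta> s a) = (residue s * b + a) mod circuit_period"
    by (simp add: delta_state_of residue_state_of) (metis mod_add_left_eq mod_mult_left_eq)
qed

lemma run_long_word:
  assumes "u \<in> lists {..<b}" "N \<le> length u"
  shows "run \<delta> (state_of x) u = run \<delta> (circuit_state x) u"
proof -
  have "x * b ^ length u mod p = x * (b ^ (length u + N) mod p) mod p"
    using power_mod_shift[OF assms(2)] by (simp add: mod_mult_right_eq)
  also have "\<dots> = x * b ^ N * b ^ length u mod p"
    by (simp add: mod_mult_right_eq power_add ac_simps)
  finally have "(x * b ^ length u + val b u) mod p = (x * b ^ N * b ^ length u + val b u) mod p"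
    by (metis mod_add_left_eq)
  then have "state_of (x * b ^ length u + val b u) = state_of (x * b ^ N * b ^ length u + val b u)"
    by (rule state_of_mod)
  with assms(1) show ?thesis
    by (simp add: run_state_of circuit_state_def)
qed

lemma ult_equiv_if_residue_eq:
  assumes "s \<in> Q" "s' \<in> Q" "residue s = residue s'"
  shows "ult_equiv b \<delta> s s'"
proof -
  obtain x y where xy: "s = state_of x" "s' = state_of y" using assms(1,2) state_of_surj by blast
  then have "circuit_state x = circuit_state y"
    using assms(3) by (simp add: residue_state_of circuit_state_eq_iff)
  then have "\<forall>u\<in>lists {..<b}. N \<le> length u \<longrightarrow> run \<delta> s u = run \<delta> s' u"
    using xy by (simp add: run_long_word)
  with N_pos show ?thesis
    unfolding ult_equiv_def by blast
qed

end

lemma (in minimal_zero_loop_aut) pseudo_morphism_if_purely_periodic: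
  assumes "accepts_by_value b q0 \<delta> F X" "purely_periodic X"
  shows "\<exists>\<phi>. pseudo_morphism_to_mod b Q q0 \<delta> (card {s \<in> Q. on_zero_circuit \<delta> s}) \<phi> \<and>
    (\<forall>s\<in>Q. \<forall>s'\<in>Q. \<phi> s = \<phi> s' \<longrightarrow> ult_equiv b \<delta> s s')"
proof -
  obtain p where p: "1 \<le> p" "\<And>x. x \<in> X \<longleftrightarrow> x mod p \<in> X"
    using assms(2) unfolding purely_periodic_iff_mod by blast
  then have "0 < p" by simp
  then obtain N where N: "1 \<le> N" "p < b ^ N" "b ^ (2 * N) mod p = b ^ N mod p"
    by (rule idempotent_power_mod[OF b_gt_1])
  interpret periodic_zero_loop_aut b Q q0 \<delta> F p N
    using \<open>0 < p\<close> N state_of_mod_eq_if_periodic_language[OF assms(1) p(2)] by unfold_locales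
  show ?thesis
    using pseudo_morphism_residue ult_equiv_if_residue_eq by (auto simp: card_zero_circuit_states)
qed

theorem theorem24:
  fixes b :: nat and Q :: "'s set" and q0 :: 's and \<delta> :: "'s \<Rightarrow> nat \<Rightarrow> 's" and F :: "'s set"
  assumes "b > 1"
    and "minimal_aut b Q q0 \<delta> F"
    and "\<delta> q0 0 = q0"
  defines "l \<equiv> card {s \<in> Q. on_zero_circuit \<delta> s}"
  shows "(\<exists>X. accepts_by_value b q0 \<delta> F X \<and> purely_periodic X) \<longleftrightarrow>
         (\<exists>\<phi>. pseudo_morphism_to_mod b Q q0 \<delta> l \<phi> \<and>
               (\<forall>s\<in>Q. \<forall>s'\<in>Q. \<phi> s = \<phi> s' \<longrightarrow> ult_equiv b \<delta> s s'))"
proof -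
  interpret minimal_zero_loop_aut b Q q0 \<delta> F
    using assms(1-3) by unfold_locales (simp_all add: minimal_aut_def)
  show ?thesis
    unfolding l_def
    by (intro iffI; elim exE conjE)
      (simp_all add: pseudo_morphism_if_purely_periodic purely_periodic_if_pseudo_morphism)
qed

end
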